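(* Fix $\gamma \in (\tfrac{2}{3},2)$ and let $x \in B_1^+(\mathrm{VI}_0) \setminus S_1^+(\mathrm{VI}_0)$. Then the solution through $x$ satisfies $$\lim_{\tau \to -\infty} \big(N_-^2 - N_+^2\big)(\tau) = 0.$$ In particular, $\alpha(x) \subset B(\mathrm{I}) \cup B_2^+(\mathrm{II}) \cup B_3^-(\mathrm{II})$.
   Context: Set $q^* := \tfrac{3\gamma-2}{2} \in (0,2)$. On $\mathbb{R}^5$ with coordinates $(\Sigma_+,\Sigma_-,N_+,N_-,\Omega)$ consider the system (with $' = d/d\tau$) $\Sigma_+' = -(2-q)\Sigma_+ - 2N_-^2$, $\Sigma_-' = -(2-q)\Sigma_- - 2\sqrt{3}N_+N_-$, $N_+' = (q+2\Sigma_+)N_+ + 2\sqrt{3}\Sigma_- N_-$, $N_-' = (q+2\Sigma_+)N_- + 2\sqrt{3}\Sigma_- N_+$, $\Omega' = 2(q-q^* )\Omega$, where $q := 2(\Sigma_+^2+\Sigma_-^2) + q^*\Omega$. The phase space $B_1^+(\mathrm{VI}_0)$ is the set of points satisfying $\Omega + \Sigma_+^2 + \Sigma_-^2 + N_-^2 = 1$, $\Omega \ge 0$ and $N_- > |N_+|$; it is invariant, solutions exist for all $\tau$, and $\varphi^\tau(x)$ denotes the flow; $(N_\pm)(\tau)$ means $N_\pm(\varphi^\tau(x))$. The $\alpha$-limit set $\alpha(x)$ is the set of all limits of $\varphi^{\tau_k}(x)$ with $\tau_k \to -\infty$. $S_1^+(\mathrm{VI}_0) := B_1^+(\mathrm{VI}_0)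 \cap \{\Sigma_- = 0, N_+ = 0\}$. Writing $\overline{B_1^+(\mathrm{VI}_0)}$ for the closure in $\mathbb{R}^5$: $B(\mathrm{I}) := \overline{B_1^+(\mathrm{VI}_0)} \cap \{N_+ = N_- = 0\}$, $B_2^+(\mathrm{II}) := \overline{B_1^+(\mathrm{VI}_0)} \cap \{N_- = N_+ \neq 0\}$, $B_3^-(\mathrm{II}) := \overline{B_1^+(\mathrm{VI}_0)} \cap \{N_- = -N_+ \neq 0\}$. *)

theory Defs
  imports "HOL-Analysis.Analysis"
begin

type_synonym state = "real \<times> real \<times> real \<times> real \<times> real"
  (* (Sigma_plus, Sigma_minus, N_plus, N_minus, Omega) *)

definition qstar :: "real \<Rightarrow> real" where
  "qstar \<gamma> = (3 * \<gamma> - 2) / 2"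

definition qfun :: "real \<Rightarrow> state \<Rightarrow> real" where
  "qfun \<gamma> p = (case p of (Sp, Sm, Np, Nm, Om) \<Rightarrow> 2 * (Sp^2 + Sm^2) + qstar \<gamma> * Om)"

definition VI0_field :: "real \<Rightarrow> state \<Rightarrow> state" where
  "VI0_field \<gamma> p = (case p of (Sp, Sm, Np, Nm, Om) \<Rightarrow>
     (let q = qfun \<gamma> p in
      ( - (2 - q) * Sp - 2 * Nm^2,
        - (2 - q) * Sm - 2 * sqrt 3 * Np * Nm,
        (q + 2 * Sp) * Np + 2 * sqrt 3 * Sm * Nm,
        (q + 2 * Sp) * Nm + 2 * sqrt 3 * Sm * Np,
        2 * (q - qstar \<gamma>) * Om)))"

definition B1plus_VI0 :: "state set" where
  "B1plus_VI0 = {(Sp, Sm, Np, Nm, Om). Om + Sp^2 + Sm^2 + Nm^2 = 1 \<and> Om \<ge> 0 \<and> Nm > \<bar>Np\<bar>}"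

definition S1plus_VI0 :: "state set" where
  "S1plus_VI0 = B1plus_VI0 \<inter> {(Sp, Sm, Np, Nm, Om). Sm = 0 \<and> Np = 0}"

definition B_I :: "state set" where
  "B_I = closure B1plus_VI0 \<inter> {(Sp, Sm, Np, Nm, Om). Np = 0 \<and> Nm = 0}"

definition B2plus_II :: "state set" where
  "B2plus_II = closure B1plus_VI0 \<inter> {(Sp, Sm, Np, Nm, Om). Nm = Np \<and> Np \<noteq> 0}"

definition B3minus_II :: "state set" where
  "B3minus_II = closure B1plus_VI0 \<inter> {(Sp, Sm, Np, Nm, Om). Nm = - Np \<and> Np \<noteq> 0}"

definition Nplus :: "state \<Rightarrow> real" where
  "Nplus p = fst (snd (snd p))"

definition Nminus :: "state \<Rightarrow> real" where
  "Nminus p = fst (snd (snd (snd p)))"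

definition alpha_limit :: "(real \<Rightarrow> 'a::topological_space) \<Rightarrow> 'a set" where
  "alpha_limit u = {y. \<exists>s :: nat \<Rightarrow> real. filterlim s at_bot sequentially \<and> (\<lambda>k. u (s k)) \<longlonglongrightarrow> y}"

end

(* Z = (Sm^2 + Nm^2) / (Nm^2 - Np^2) is a Lyapunov function: along solutions
   Z' = -4 (1 + Sp) Sm^2 / (Nm^2 - Np^2) <= -2 Sm^2, so Z grows as tau -> -infinity.
   If Z is unbounded, then 0 < Nm^2 - Np^2 <= 1/Z -> 0.  If Z is bounded, Barbalat's
   argument gives Sm -> 0 and then Sm' -> 0; the Sm-equation forces Np Nm -> 0, hence
   Np -> 0, and Z >= Z(0) > 1 (this is where x is not in S1plus_VI0) forces Nm -> 0.
   The alpha-limit set lies in the closure of the orbit, where Nm^2 = Np^2 by continuity. *)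

theory Submission
  imports Defs
begin

section \<open>Scalar ODEs and Barbalat's lemma\<close>

lemma linear_ode_positive_factor:
  fixes h a :: "real \<Rightarrow> real"
  assumes "continuous_on UNIV a" and "\<And>t. (h has_real_derivative a t * h t) (at t)"
  shows "\<exists>c>0. h t = c * h 0"
proof -
  define S where "S = {-\<bar>t\<bar>..\<bar>t\<bar>}"
  define A where "A = (\<lambda>x. integral {-\<bar>t\<bar>..x} a)"
  have "((\<lambda>x. h x * exp (- A x)) has_real_derivative 0) (at x within S)" if "x \<in> S" for x
  proof -
    have "(A has_real_derivative a x) (at x within S)"
      unfolding A_def S_def
      by (rule integral_has_real_derivative) (use assms(1) that S_def in \<open>auto intro: continuous_on_subset\<close>)
    then have "((\<lambda>x. h x * exp (- A x)) has_real_derivative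
        a x * h x * exp (- A x) + h x * (exp (- A x) * - a x)) (at x within S)"
      using has_field_derivative_at_within[OF assms(2)] by (auto intro!: derivative_eq_intros)
    then show ?thesis by (simp add: algebra_simps)
  qed
  then obtain c where "\<forall>x\<in>S. h x * exp (- A x) = c"
    using has_field_derivative_zero_constant[of S] unfolding S_def by force
  moreover have "t \<in> S" "0 \<in> S" unfolding S_def by auto
  ultimately have "h t = exp (A t - A 0) * h 0"
    by (simp add: exp_diff exp_minus field_simps)
  then show ?thesis by (intro exI[of _ "exp (A t - A 0)"]) auto
qed

lemma uniformly_continuous_on_subset:
  fixes f :: "'a::metric_space \<Rightarrow> 'b::metric_space"
  shows "uniformly_continuous_on T f \<Longrightarrow> S \<subseteq> T \<Longrightarrow> uniformly_continuous_on S f"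
  unfolding uniformly_continuous_on_def by (meson subsetD)

lemma uniformly_continuous_on_bounded_orbit:
  fixes u :: "real \<Rightarrow> 'a::euclidean_space" and g :: "'a \<Rightarrow> 'b::metric_space"
  assumes ode: "\<And>t. (u has_vector_derivative F (u t)) (at t)"
    and "continuous_on UNIV F" and "continuous_on UNIV g" and "bounded (range u)"
  shows "uniformly_continuous_on UNIV (\<lambda>t. g (u t))"
proof -
  let ?K = "closure (range u)"
  have K: "compact ?K"
    using assms(4) by (simp add: compact_closure)
  have uK: "u t \<in> ?K" for t
    by (meson closure_subset rangeI subsetD)
  have "bounded (F ` ?K)"
    by (intro compact_imp_bounded compact_continuous_image continuous_on_subset[OF assms(2)] K) simp
  then obtain B where B: "\<And>y. y \<in> ?K \<Longrightarrow> norm (F y) \<le> B"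
    unfolding bounded_iff by blast
  have "B-lipschitz_on UNIV u"
  proof (rule bounded_derivative_imp_lipschitz)
    show "(u has_derivative (\<lambda>h. h *\<^sub>R F (u t))) (at t within UNIV)" for t
      using ode[of t] by (simp add: has_vector_derivative_def)
    show "onorm (\<lambda>h. h *\<^sub>R F (u t)) \<le> B" for t
      using onorm_scaleR_left[OF bounded_linear_ident, of "F (u t)"] B[OF uK] by (simp add: onorm_id)
    show "0 \<le> B"
      using norm_ge_zero B[OF uK] by (rule order_trans)
  qed simp
  then have "uniformly_continuous_on UNIV u"
    by (rule lipschitz_on_uniformly_continuous)
  moreover have "uniformly_continuous_on (range u) g"
    using compact_uniformly_continuous[OF continuous_on_subset[OF assms(3)] K] closure_subset
    by (rule uniformly_continuous_on_subset) simp
  ultimately show ?thesis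
    by (rule uniformly_continuous_on_compose)
qed

lemma barbalat_at_bot:
  fixes E E' f :: "real \<Rightarrow> real"
  assumes deriv: "\<And>t. (E has_real_derivative E' t) (at t)"
    and dissipation: "\<And>t. E' t \<le> - f t" and f_nonneg: "\<And>t. 0 \<le> f t"
    and "bdd_above (range E)" and "uniformly_continuous_on UNIV f"
  shows "(f \<longlongrightarrow> 0) at_bot"
proof (rule tendstoI)
  fix \<epsilon> :: real assume "0 < \<epsilon>"
  then obtain \<delta> where "0 < \<delta>" and \<delta>: "\<And>t z. dist z t < \<delta> \<Longrightarrow> dist (f z) (f t) < \<epsilon> / 2"
    using assms(5)[unfolded uniformly_continuous_on_def, rule_format, of "\<epsilon> / 2"] by auto
  have antimono: "E b \<le> E a" if "a \<le> b" for a b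
  proof (rule DERIV_nonpos_imp_nonincreasing[OF that])
    show "\<exists>y. (E has_real_derivative y) (at x) \<and> y \<le> 0" for x
      using deriv[of x] dissipation[of x] f_nonneg[of x] by (intro exI[of _ "E' x"]) auto
  qed
  have "Sup (range E) - \<epsilon> * \<delta> / 2 < Sup (range E)"
    using \<open>0 < \<epsilon>\<close> \<open>0 < \<delta>\<close> by simp
  then obtain t\<^sub>1 where t\<^sub>1: "Sup (range E) - \<epsilon> * \<delta> / 2 < E t\<^sub>1"
    using less_cSupD[of "range E"] by blast
  have "f t < \<epsilon>" if "t \<le> t\<^sub>1 - \<delta>" for t
  proof -
    obtain z where z: "t < z" "z < t + \<delta>" and mvt: "E (t + \<delta>) - E t = \<delta> * E' z"
      using MVT2[OF _ deriv, of t "t + \<delta>"] \<open>0 < \<delta>\<close> by auto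
    have "E t\<^sub>1 \<le> E (t + \<delta>)"
      using antimono that by simp
    moreover have "E t \<le> Sup (range E)"
      using assms(4) by (simp add: cSup_upper)
    moreover have "\<delta> * E' z \<le> \<delta> * - f z"
      using dissipation[of z] \<open>0 < \<delta>\<close> by (intro mult_left_mono) auto
    ultimately have "\<delta> * f z < \<delta> * (\<epsilon> / 2)"
      using t\<^sub>1 mvt by (simp add: algebra_simps)
    then have "f z < \<epsilon> / 2"
      using \<open>0 < \<delta>\<close> by simp
    moreover have "dist (f t) (f z) < \<epsilon> / 2"
      using \<delta>[of t z] z by (simp add: dist_real_def)
    ultimately show ?thesis
      unfolding dist_real_def by arith
  qed
  then show "\<forall>\<^sub>F t in at_bot. dist (f t) 0 < \<epsilon>"
    unfolding eventually_at_bot_linorder using f_nonneg by (auto simp: dist_real_def)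
qed

lemma deriv_tendsto_0_at_bot:
  fixes f g :: "real \<Rightarrow> real"
  assumes deriv: "\<And>t. (f has_real_derivative g t) (at t)"
    and "(f \<longlongrightarrow> 0) at_bot" and "uniformly_continuous_on UNIV g"
  shows "(g \<longlongrightarrow> 0) at_bot"
proof (rule tendstoI)
  fix \<epsilon> :: real assume "0 < \<epsilon>"
  then obtain \<delta> where "0 < \<delta>" and \<delta>: "\<And>t z. dist z t < \<delta> \<Longrightarrow> dist (g z) (g t) < \<epsilon> / 2"
    using assms(3)[unfolded uniformly_continuous_on_def, rule_format, of "\<epsilon> / 2"] by auto
  have "\<forall>\<^sub>F t in at_bot. \<bar>f t\<bar> < \<epsilon> * \<delta> / 4"
    using tendstoD[OF assms(2), of "\<epsilon> * \<delta> / 4"] \<open>0 < \<epsilon>\<close> \<open>0 < \<delta>\<close> by (simp add: dist_real_def)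
  then obtain T where T: "\<And>t. t \<le> T \<Longrightarrow> \<bar>f t\<bar> < \<epsilon> * \<delta> / 4"
    unfolding eventually_at_bot_linorder by blast
  have "\<bar>g t\<bar> < \<epsilon>" if "t \<le> T - \<delta>" for t
  proof -
    obtain z where z: "t < z" "z < t + \<delta>" and mvt: "f (t + \<delta>) - f t = \<delta> * g z"
      using MVT2[OF _ deriv, of t "t + \<delta>"] \<open>0 < \<delta>\<close> by auto
    have "\<bar>\<delta> * g z\<bar> \<le> \<bar>f (t + \<delta>)\<bar> + \<bar>f t\<bar>"
      unfolding mvt[symmetric] by (rule abs_triangle_ineq4)
    also have "\<dots> < \<delta> * (\<epsilon> / 2)"
      using T[of t] T[of "t + \<delta>"] that \<open>0 < \<delta>\<close> by (simp add: field_simps)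
    finally have "\<bar>g z\<bar> < \<epsilon> / 2"
      using \<open>0 < \<delta>\<close> by (simp add: abs_mult)
    moreover have "dist (g t) (g z) < \<epsilon> / 2"
      using \<delta>[of t z] z by (simp add: dist_real_def)
    ultimately show ?thesis
      unfolding dist_real_def by arith
  qed
  then show "\<forall>\<^sub>F t in at_bot. dist (g t) 0 < \<epsilon>"
    unfolding eventually_at_bot_linorder by (auto simp: dist_real_def)
qed

section \<open>Solutions of the Bianchi VI0 system in B1plus_VI0\<close>

lemma continuous_on_VI0_field: "continuous_on UNIV (VI0_field \<gamma>)"
  unfolding VI0_field_def qfun_def Let_def split_beta' by (intro continuous_intros)

lemma bounded_B1plus_VI0: "bounded B1plus_VI0"
proof (rule bounded_subset)
  let ?I = "{-1..1::real}"
  show "bounded (?I \<times> ?I \<times> ?I \<times> ?I \<times> ?I)"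
    by (intro bounded_Times compact_imp_bounded compact_Icc)
  have "x \<in> ?I \<times> ?I \<times> ?I \<times> ?I \<times> ?I" if "x \<in> B1plus_VI0" for x
  proof -
    obtain a b c d e where x: "x = (a, b, c, d, e)"
      by (cases x) auto
    then have "e + a^2 + b^2 + d^2 = 1" and "0 \<le> e" "\<bar>c\<bar> < d"
      using that by (simp_all add: B1plus_VI0_def)
    then have "a^2 \<le> 1" "b^2 \<le> 1" "d^2 \<le> 1" "e \<le> 1"
      using zero_le_power2[of a] zero_le_power2[of b] zero_le_power2[of d] by linarith+
    then have "\<bar>a\<bar> \<le> 1" "\<bar>b\<bar> \<le> 1" "\<bar>d\<bar> \<le> 1"
      by (simp_all add: abs_square_le_1)
    with \<open>0 \<le> e\<close> \<open>e \<le> 1\<close> \<open>\<bar>c\<bar> < d\<close> show ?thesis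
      unfolding x by (auto simp: abs_le_iff)
  qed
  then show "B1plus_VI0 \<subseteq> ?I \<times> ?I \<times> ?I \<times> ?I \<times> ?I"
    by blast
qed

locale B1plus_VI0_orbit =
  fixes \<gamma> :: real and u :: "real \<Rightarrow> state"
  assumes ode: "\<And>t. (u has_vector_derivative VI0_field \<gamma> (u t)) (at t)"
    and initial: "u 0 \<in> B1plus_VI0"
begin

definition "Sp t = fst (u t)"
definition "Sm t = fst (snd (u t))"
definition "Np t = Nplus (u t)"
definition "Nm t = Nminus (u t)"
definition "Om t = snd (snd (snd (snd (u t))))"
definition "q t = qfun \<gamma> (u t)"

lemma u_eq: "u t = (Sp t, Sm t, Np t, Nm t, Om t)"
  by (simp add: Sp_def Sm_def Np_def Nm_def Om_def Nplus_def Nminus_def)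

lemma q_eq: "q t = 2 * (Sp t^2 + Sm t^2) + qstar \<gamma> * Om t"
  unfolding q_def by (subst u_eq) (simp add: qfun_def)

lemma VI0_field_eq: "VI0_field \<gamma> (u t) =
   (- (2 - q t) * Sp t - 2 * Nm t^2,
    - (2 - q t) * Sm t - 2 * sqrt 3 * Np t * Nm t,
    (q t + 2 * Sp t) * Np t + 2 * sqrt 3 * Sm t * Nm t,
    (q t + 2 * Sp t) * Nm t + 2 * sqrt 3 * Sm t * Np t,
    2 * (q t - qstar \<gamma>) * Om t)"
  unfolding q_eq by (subst u_eq) (simp add: VI0_field_def qfun_def Let_def)

lemma has_real_derivative_component:
  assumes "bounded_linear \<pi>"
  shows "((\<lambda>t. \<pi> (u t)) has_real_derivative \<pi> (VI0_field \<gamma> (u t))) (at t)"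
  using bounded_linear.has_vector_derivative[OF assms ode]
  by (simp add: has_real_derivative_iff_has_vector_derivative)

lemma Sp_deriv: "(Sp has_real_derivative - (2 - q t) * Sp t - 2 * Nm t^2) (at t)"
  using has_real_derivative_component[OF bounded_linear_fst, of t]
  unfolding VI0_field_eq by (simp add: Sp_def [abs_def])

lemma Sm_deriv: "(Sm has_real_derivative - (2 - q t) * Sm t - 2 * sqrt 3 * Np t * Nm t) (at t)"
  using has_real_derivative_component[OF bounded_linear_compose[OF bounded_linear_fst bounded_linear_snd],
      of t]
  unfolding VI0_field_eq by (simp add: Sm_def [abs_def])

lemma Np_deriv: "(Np has_real_derivative (q t + 2 * Sp t) * Np t + 2 * sqrt 3 * Sm t * Nm t) (at t)"
  using has_real_derivative_component[of "\<lambda>x. fst (snd (snd x))", of t]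
  unfolding VI0_field_eq
  by (simp add: Np_def [abs_def] Nplus_def bounded_linear_compose[OF bounded_linear_fst]
      bounded_linear_compose[OF bounded_linear_snd] bounded_linear_snd)

lemma Nm_deriv: "(Nm has_real_derivative (q t + 2 * Sp t) * Nm t + 2 * sqrt 3 * Sm t * Np t) (at t)"
  using has_real_derivative_component[of "\<lambda>x. fst (snd (snd (snd x)))", of t]
  unfolding VI0_field_eq
  by (simp add: Nm_def [abs_def] Nminus_def bounded_linear_compose[OF bounded_linear_fst]
      bounded_linear_compose[OF bounded_linear_snd] bounded_linear_snd)

lemma Om_deriv: "(Om has_real_derivative 2 * (q t - qstar \<gamma>) * Om t) (at t)"
  using has_real_derivative_component[of "\<lambda>x. snd (snd (snd (snd x)))", of t]
  unfolding VI0_field_eq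
  by (simp add: Om_def [abs_def] bounded_linear_compose[OF bounded_linear_snd] bounded_linear_snd)

lemma isCont_components [continuous_intros]:
  "isCont Sp t" "isCont Sm t" "isCont Np t" "isCont Nm t" "isCont Om t"
  by (rule DERIV_isCont[OF Sp_deriv] DERIV_isCont[OF Sm_deriv] DERIV_isCont[OF Np_deriv]
      DERIV_isCont[OF Nm_deriv] DERIV_isCont[OF Om_deriv])+

lemma isCont_q [continuous_intros]: "isCont q t"
  unfolding q_eq [abs_def] by (intro continuous_intros)

lemma in_B1plus_VI0_iff:
  "u t \<in> B1plus_VI0 \<longleftrightarrow> Om t + Sp t^2 + Sm t^2 + Nm t^2 = 1 \<and> 0 \<le> Om t \<and> \<bar>Np t\<bar> < Nm t"
  by (subst u_eq) (simp add: B1plus_VI0_def)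

lemma orbit_constraint: "Om t + Sp t^2 + Sm t^2 + Nm t^2 = 1"
proof -
  define h where "h t = Om t + Sp t^2 + Sm t^2 + Nm t^2 - 1" for t
  have "(h has_real_derivative 2 * q t * h t) (at t)" for t
    unfolding h_def [abs_def]
    by (rule derivative_eq_intros Sp_deriv Sm_deriv Nm_deriv Om_deriv refl)+
      (simp add: q_eq algebra_simps power2_eq_square)
  moreover have "continuous_on UNIV (\<lambda>t. 2 * q t)"
    by (intro continuous_at_imp_continuous_on ballI continuous_intros)
  ultimately obtain c where "h t = c * h 0"
    using linear_ode_positive_factor by blast
  with initial show ?thesis
    by (simp add: h_def in_B1plus_VI0_iff)
qed

lemma Om_nonneg: "0 \<le> Om t"
proof -
  have "continuous_on UNIV (\<lambda>t. 2 * (q t - qstar \<gamma>))"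
    by (intro continuous_at_imp_continuous_on ballI continuous_intros)
  then obtain c where "c > 0" "Om t = c * Om 0"
    using linear_ode_positive_factor Om_deriv by blast
  with initial show ?thesis
    by (simp add: in_B1plus_VI0_iff)
qed

lemma Np_abs_less_Nm: "\<bar>Np t\<bar> < Nm t"
proof -
  have "0 < Nm t + \<sigma> * Np t" if \<sigma>: "\<sigma> \<in> {1, -1}" for \<sigma> :: real
  proof -
    have "((\<lambda>t. Nm t + \<sigma> * Np t) has_real_derivative
        (q t + 2 * Sp t + \<sigma> * 2 * sqrt 3 * Sm t) * (Nm t + \<sigma> * Np t)) (at t)" for t
      by (rule derivative_eq_intros Np_deriv Nm_deriv refl)+ (use \<sigma> in \<open>auto simp: algebra_simps\<close>)
    moreover have "continuous_on UNIV (\<lambda>t. q t + 2 * Sp t + \<sigma> * 2 * sqrt 3 * Sm t)"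
      by (intro continuous_at_imp_continuous_on ballI continuous_intros)
    ultimately obtain c where "c > 0" "Nm t + \<sigma> * Np t = c * (Nm 0 + \<sigma> * Np 0)"
      using linear_ode_positive_factor[of _ "\<lambda>t. Nm t + \<sigma> * Np t"] by blast
    moreover have "0 < Nm 0 + \<sigma> * Np 0"
      using initial \<sigma> by (auto simp: in_B1plus_VI0_iff)
    ultimately show ?thesis
      by simp
  qed
  from this[of 1] this[of "-1"] show ?thesis
    by auto
qed

lemma orbit_in_B1plus_VI0: "u t \<in> B1plus_VI0"
  using orbit_constraint Om_nonneg Np_abs_less_Nm by (simp add: in_B1plus_VI0_iff)

lemma bounded_orbit: "bounded (range u)"
  using bounded_subset[OF bounded_B1plus_VI0] orbit_in_B1plus_VI0 by blast

lemma sum_squares_le_1: "Sp t^2 + Sm t^2 + Nm t^2 \<le> 1"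
  using orbit_constraint[of t] Om_nonneg[of t] by linarith

lemma abs_Sp_le_1: "\<bar>Sp t\<bar> \<le> 1"
proof -
  have "Sp t^2 \<le> 1"
    using sum_squares_le_1[of t] zero_le_power2[of "Sm t"] zero_le_power2[of "Nm t"] by linarith
  then show ?thesis
    by (simp add: abs_square_le_1)
qed

lemma abs_q_le: "\<bar>q t\<bar> \<le> 2 + \<bar>qstar \<gamma>\<bar>"
proof -
  have "Om t \<le> 1"
    using orbit_constraint[of t] zero_le_power2[of "Sp t"] zero_le_power2[of "Sm t"] zero_le_power2[of "Nm t"]
    by linarith
  then have "\<bar>qstar \<gamma> * Om t\<bar> \<le> \<bar>qstar \<gamma>\<bar>"
    using Om_nonneg[of t] by (simp add: abs_mult mult_left_le)
  moreover have "Sp t^2 + Sm t^2 \<le> 1"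
    using sum_squares_le_1[of t] zero_le_power2[of "Nm t"] by linarith
  ultimately show ?thesis
    unfolding q_eq by (smt (verit) zero_le_power2)
qed

lemma uniformly_continuous_on_comp_orbit:
  fixes g :: "state \<Rightarrow> 'b::metric_space"
  shows "continuous_on UNIV g \<Longrightarrow> uniformly_continuous_on UNIV (\<lambda>t. g (u t))"
  by (rule uniformly_continuous_on_bounded_orbit[OF ode continuous_on_VI0_field _ bounded_orbit])

lemma Nm_sq_minus_Np_sq_pos: "0 < Nm t^2 - Np t^2"
  using power_strict_mono[OF Np_abs_less_Nm[of t] abs_ge_zero, of 2] by simp

definition "lyapunov t = (Sm t^2 + Nm t^2) / (Nm t^2 - Np t^2)"

lemma lyapunov_deriv:
  "(lyapunov has_real_derivative - 4 * (1 + Sp t) * Sm t^2 / (Nm t^2 - Np t^2)) (at t)"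
proof -
  let ?N = "Sm t^2 + Nm t^2" and ?D = "Nm t^2 - Np t^2"
  have num: "((\<lambda>t. Sm t^2 + Nm t^2) has_real_derivative
      - 2 * (2 - q t) * Sm t^2 + 2 * (q t + 2 * Sp t) * Nm t^2) (at t)"
    by (rule derivative_eq_intros Sm_deriv Nm_deriv refl)+ (simp add: algebra_simps power2_eq_square)
  have den: "((\<lambda>t. Nm t^2 - Np t^2) has_real_derivative 2 * (q t + 2 * Sp t) * ?D) (at t)"
    by (rule derivative_eq_intros Np_deriv Nm_deriv refl)+ (simp add: algebra_simps power2_eq_square)
  \<comment> \<open>the terms in q cancel, so nothing about qstar \<gamma> is needed\<close>
  have "(- 2 * (2 - q t) * Sm t^2 + 2 * (q t + 2 * Sp t) * Nm t^2) * ?D - ?N * (2 * (q t + 2 * Sp t) * ?D)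
      = - 4 * (1 + Sp t) * Sm t^2 * ?D"
    by (simp add: algebra_simps)
  then show ?thesis
    using DERIV_divide[OF num den] Nm_sq_minus_Np_sq_pos[of t]
    unfolding lyapunov_def [abs_def] by simp
qed

lemma lyapunov_dissipation: "- 4 * (1 + Sp t) * Sm t^2 / (Nm t^2 - Np t^2) \<le> - 2 * Sm t^2"
proof -
  have "(1 - Sp t) * (1 + Sp t) \<le> 2 * (1 + Sp t)"
    using abs_Sp_le_1[of t] by (intro mult_right_mono) auto
  then have "1 - Sp t^2 \<le> 2 * (1 + Sp t)"
    by (simp add: algebra_simps power2_eq_square)
  then have "Nm t^2 - Np t^2 \<le> 2 * (1 + Sp t)"
    using sum_squares_le_1[of t] zero_le_power2[of "Sm t"] zero_le_power2[of "Np t"] by linarith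
  then have "2 * Sm t^2 * (Nm t^2 - Np t^2) \<le> 2 * Sm t^2 * (2 * (1 + Sp t))"
    by (intro mult_left_mono) auto
  then show ?thesis
    using Nm_sq_minus_Np_sq_pos[of t] by (simp add: field_simps)
qed

lemma lyapunov_antimono:
  assumes "s \<le> t"
  shows "lyapunov t \<le> lyapunov s"
proof (rule DERIV_nonpos_imp_nonincreasing[OF assms])
  fix x
  have "- 4 * (1 + Sp x) * Sm x^2 / (Nm x^2 - Np x^2) \<le> 0"
    using lyapunov_dissipation[of x] zero_le_power2[of "Sm x"] by linarith
  with lyapunov_deriv show "\<exists>y. (lyapunov has_real_derivative y) (at x) \<and> y \<le> 0"
    by blast
qed

lemma one_less_lyapunov:
  assumes "u t \<notin> S1plus_VI0"
  shows "1 < lyapunov t"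
proof -
  have "Sm t \<noteq> 0 \<or> Np t \<noteq> 0"
    using assms orbit_in_B1plus_VI0[of t] u_eq[of t] unfolding S1plus_VI0_def by auto
  then have "Nm t^2 - Np t^2 < Sm t^2 + Nm t^2"
    using sum_power2_gt_zero_iff[of "Sm t" "Np t"] by linarith
  with Nm_sq_minus_Np_sq_pos[of t] show ?thesis
    unfolding lyapunov_def by simp
qed

lemma lyapunov_tendsto_at_top_if_unbounded:
  assumes "\<not> bdd_above (range lyapunov)"
  shows "filterlim lyapunov at_top at_bot"
  unfolding filterlim_at_top eventually_at_bot_linorder
proof
  fix Z
  obtain t\<^sub>0 where "Z \<le> lyapunov t\<^sub>0"
    using assms by (meson bdd_aboveI2 nle_le)
  then show "\<exists>t\<^sub>0. \<forall>t\<le>t\<^sub>0. Z \<le> lyapunov t"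
    using lyapunov_antimono order_trans by blast
qed

lemma Nm_sq_minus_Np_sq_le_inverse_lyapunov: "Nm t^2 - Np t^2 \<le> inverse (lyapunov t)"
proof -
  have "0 < Sm t^2 + Nm t^2"
    using Nm_sq_minus_Np_sq_pos[of t] zero_le_power2[of "Sm t"] zero_le_power2[of "Np t"] by linarith
  moreover have "Sm t^2 + Nm t^2 \<le> 1"
    using sum_squares_le_1[of t] zero_le_power2[of "Sp t"] by linarith
  ultimately show ?thesis
    using Nm_sq_minus_Np_sq_pos[of t] by (simp add: lyapunov_def le_divide_eq mult_left_le)
qed

lemma Sm_tendsto_0_if_lyapunov_bounded:
  assumes "bdd_above (range lyapunov)"
  shows "(Sm \<longlongrightarrow> 0) at_bot"
proof -
  have "((\<lambda>t. Sm t^2) \<longlongrightarrow> 0) at_bot"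
  proof (rule barbalat_at_bot[OF lyapunov_deriv _ _ assms])
    show "- 4 * (1 + Sp t) * Sm t^2 / (Nm t^2 - Np t^2) \<le> - (Sm t^2)" for t
      using lyapunov_dissipation[of t] zero_le_power2[of "Sm t"] by linarith
    show "uniformly_continuous_on UNIV (\<lambda>t. Sm t^2)"
      using uniformly_continuous_on_comp_orbit[of "\<lambda>x. (fst (snd x))^2"]
      by (simp add: Sm_def continuous_intros)
  qed simp
  then show ?thesis
    using tendsto_real_sqrt by (fastforce simp: tendsto_rabs_zero_iff)
qed

lemma Np_sq_tendsto_0_if_Sm_tendsto_0:
  assumes Sm: "(Sm \<longlongrightarrow> 0) at_bot"
  shows "((\<lambda>t. Np t^2) \<longlongrightarrow> 0) at_bot"
proof -
  have "((\<lambda>t. - (2 - q t) * Sm t - 2 * sqrt 3 * Np t * Nm t) \<longlongrightarrow> 0) at_bot"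
  proof (rule deriv_tendsto_0_at_bot[OF Sm_deriv Sm])
    show "uniformly_continuous_on UNIV (\<lambda>t. - (2 - q t) * Sm t - 2 * sqrt 3 * Np t * Nm t)"
      using uniformly_continuous_on_comp_orbit[of "\<lambda>x. fst (snd (VI0_field \<gamma> x))"]
      by (simp add: VI0_field_eq continuous_intros continuous_on_VI0_field)
  qed
  moreover have "((\<lambda>t. (2 - q t) * Sm t) \<longlongrightarrow> 0) at_bot"
  proof (rule Lim_null_comparison)
    show "\<forall>\<^sub>F t in at_bot. norm ((2 - q t) * Sm t) \<le> (4 + \<bar>qstar \<gamma>\<bar>) * \<bar>Sm t\<bar>"
    proof (intro always_eventually allI)
      fix t
      have "\<bar>2 - q t\<bar> \<le> 4 + \<bar>qstar \<gamma>\<bar>"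
        using abs_q_le[of t] by (auto simp: abs_le_iff)
      then show "norm ((2 - q t) * Sm t) \<le> (4 + \<bar>qstar \<gamma>\<bar>) * \<bar>Sm t\<bar>"
        by (simp add: abs_mult mult_right_mono)
    qed
    show "((\<lambda>t. (4 + \<bar>qstar \<gamma>\<bar>) * \<bar>Sm t\<bar>) \<longlongrightarrow> 0) at_bot"
      using Sm by (intro tendsto_mult_right_zero) (simp add: tendsto_rabs_zero_iff)
  qed
  ultimately have "((\<lambda>t. ((- (2 - q t) * Sm t - 2 * sqrt 3 * Np t * Nm t) + (2 - q t) * Sm t)
      * (- 1 / (2 * sqrt 3))) \<longlongrightarrow> 0) at_bot"
    by (intro tendsto_mult_left_zero tendsto_add_zero)
  then have "((\<lambda>t. \<bar>Np t * Nm t\<bar>) \<longlongrightarrow> 0) at_bot"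
    by (simp add: field_simps tendsto_rabs_zero_iff)
  then show ?thesis
  proof (rule Lim_null_comparison[rotated], intro always_eventually allI)
    fix t
    have "\<bar>Np t\<bar> * \<bar>Np t\<bar> \<le> \<bar>Np t\<bar> * Nm t"
      using Np_abs_less_Nm[of t] by (intro mult_left_mono) auto
    then show "norm (Np t^2) \<le> \<bar>Np t * Nm t\<bar>"
      using Np_abs_less_Nm[of t] by (simp add: power2_eq_square abs_mult)
  qed
qed

lemma Nm_sq_minus_Np_sq_tendsto_0_if_lyapunov_unbounded:
  assumes "\<not> bdd_above (range lyapunov)"
  shows "((\<lambda>t. Nm t^2 - Np t^2) \<longlongrightarrow> 0) at_bot"
proof (rule tendsto_sandwich[OF _ _ tendsto_const])
  show "((\<lambda>t. inverse (lyapunov t)) \<longlongrightarrow> 0) at_bot"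
    using lyapunov_tendsto_at_top_if_unbounded[OF assms] by (rule tendsto_inverse_0_at_top)
  show "\<forall>\<^sub>F t in at_bot. 0 \<le> Nm t^2 - Np t^2"
    using Nm_sq_minus_Np_sq_pos by (intro always_eventually allI less_imp_le)
  show "\<forall>\<^sub>F t in at_bot. Nm t^2 - Np t^2 \<le> inverse (lyapunov t)"
    using Nm_sq_minus_Np_sq_le_inverse_lyapunov by (intro always_eventually allI)
qed

lemma Nm_sq_minus_Np_sq_tendsto_0_if_lyapunov_bounded:
  assumes "bdd_above (range lyapunov)" and "1 < lyapunov 0"
  shows "((\<lambda>t. Nm t^2 - Np t^2) \<longlongrightarrow> 0) at_bot"
proof -
  let ?L = "lyapunov 0"
  have Sm: "(Sm \<longlongrightarrow> 0) at_bot"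
    using assms(1) by (rule Sm_tendsto_0_if_lyapunov_bounded)
  have Nm: "((\<lambda>t. Nm t^2) \<longlongrightarrow> 0) at_bot"
  proof (rule Lim_null_comparison)
    have "((\<lambda>t. Sm t^2 + ?L * Np t^2) \<longlongrightarrow> 0^2 + 0) at_bot"
      using Sm Np_sq_tendsto_0_if_Sm_tendsto_0[OF Sm]
      by (intro tendsto_add tendsto_power tendsto_mult_right_zero)
    then show "((\<lambda>t. (Sm t^2 + ?L * Np t^2) / (?L - 1)) \<longlongrightarrow> 0) at_bot"
      by (intro tendsto_divide_zero) simp
    show "\<forall>\<^sub>F t in at_bot. norm (Nm t^2) \<le> (Sm t^2 + ?L * Np t^2) / (?L - 1)"
      unfolding eventually_at_bot_linorder
    proof (intro exI[of _ 0] allI impI)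
      fix t :: real assume "t \<le> 0"
      then have "?L \<le> lyapunov t"
        by (rule lyapunov_antimono)
      then have "?L * (Nm t^2 - Np t^2) \<le> Sm t^2 + Nm t^2"
        using Nm_sq_minus_Np_sq_pos[of t] by (simp add: lyapunov_def pos_le_divide_eq)
      then have "Nm t^2 * (?L - 1) \<le> Sm t^2 + ?L * Np t^2"
        by (simp add: algebra_simps)
      then show "norm (Nm t^2) \<le> (Sm t^2 + ?L * Np t^2) / (?L - 1)"
        using assms(2) by (simp add: pos_le_divide_eq)
    qed
  qed
  show ?thesis
  proof (rule Lim_null_comparison[OF _ Nm], intro always_eventually allI)
    show "norm (Nm t^2 - Np t^2) \<le> Nm t^2" for t
      using Nm_sq_minus_Np_sq_pos[of t] by simp
  qed
qed

lemma Nm_sq_minus_Np_sq_tendsto_0: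
  assumes "u 0 \<notin> S1plus_VI0"
  shows "((\<lambda>t. Nm t^2 - Np t^2) \<longlongrightarrow> 0) at_bot"
proof (cases "bdd_above (range lyapunov)")
  case True
  then show ?thesis
    using one_less_lyapunov[OF assms] by (rule Nm_sq_minus_Np_sq_tendsto_0_if_lyapunov_bounded)
next
  case False
  then show ?thesis
    by (rule Nm_sq_minus_Np_sq_tendsto_0_if_lyapunov_unbounded)
qed

end

section \<open>Alpha-limit sets\<close>

lemma alpha_limit_subset_closure_range:
  fixes u :: "real \<Rightarrow> 'a::metric_space"
  shows "alpha_limit u \<subseteq> closure (range u)"
proof
  fix y assume "y \<in> alpha_limit u"
  then obtain s :: "nat \<Rightarrow> real" where "(\<lambda>k. u (s k)) \<longlonglongrightarrow> y"
    unfolding alpha_limit_def by blast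
  then show "y \<in> closure (range u)"
    unfolding closure_sequential by (intro exI[of _ "\<lambda>k. u (s k)"] conjI allI rangeI)
qed

lemma alpha_limit_tendsto_eq:
  fixes u :: "real \<Rightarrow> 'a::metric_space" and g :: "'a \<Rightarrow> 'b::metric_space"
  assumes "continuous_on UNIV g" and "((\<lambda>t. g (u t)) \<longlongrightarrow> c) at_bot" and "y \<in> alpha_limit u"
  shows "g y = c"
proof -
  obtain s :: "nat \<Rightarrow> real" where s: "filterlim s at_bot sequentially" "(\<lambda>k. u (s k)) \<longlonglongrightarrow> y"
    using assms(3) unfolding alpha_limit_def by blast
  have "isCont g y"
    using assms(1) by (simp add: continuous_on_eq_continuous_at)
  then have "(\<lambda>k. g (u (s k))) \<longlonglongrightarrow> g y"
    using s(2) by (rule isCont_tendsto_compose)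
  moreover have "(\<lambda>k. g (u (s k))) \<longlonglongrightarrow> c"
    using filterlim_compose[OF assms(2) s(1)] .
  ultimately show ?thesis
    by (rule LIMSEQ_unique)
qed

lemma closure_B1plus_VI0_Nminus_sq_eq_Nplus_sq:
  assumes "y \<in> closure B1plus_VI0" and "Nminus y^2 = Nplus y^2"
  shows "y \<in> B_I \<union> B2plus_II \<union> B3minus_II"
proof -
  obtain a b c d e where y: "y = (a, b, c, d, e)"
    by (cases y) auto
  have "d = c \<or> d = - c"
    using assms(2) by (simp add: y Nminus_def Nplus_def power2_eq_iff)
  then consider "c = 0" "d = 0" | "c \<noteq> 0" "d = c" | "c \<noteq> 0" "d = - c"
    by fastforce
  then show ?thesis
  proof cases
    case 1
    then have "y \<in> B_I"
      using assms(1) by (simp add: y B_I_def)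
    then show ?thesis by blast
  next
    case 2
    then have "y \<in> B2plus_II"
      using assms(1) by (simp add: y B2plus_II_def)
    then show ?thesis by blast
  next
    case 3
    then have "y \<in> B3minus_II"
      using assms(1) by (simp add: y B3minus_II_def)
    then show ?thesis by blast
  qed
qed

theorem mainTheorem4:
  fixes \<gamma> :: real and x :: state and u :: "real \<Rightarrow> state"
  assumes "2/3 < \<gamma>" and "\<gamma> < 2"
    and "x \<in> B1plus_VI0 - S1plus_VI0"
    and "\<And>t. (u has_vector_derivative VI0_field \<gamma> (u t)) (at t)"
    and "u 0 = x"
  shows "((\<lambda>\<tau>. (Nminus (u \<tau>))^2 - (Nplus (u \<tau>))^2) \<longlongrightarrow> 0) at_bot
         \<and> alpha_limit u \<subseteq> B_I \<union> B2plus_II \<union> B3minus_II"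
proof -
  interpret B1plus_VI0_orbit \<gamma> u
    using assms(3-5) by unfold_locales auto
  have lim: "((\<lambda>t. Nminus (u t)^2 - Nplus (u t)^2) \<longlongrightarrow> 0) at_bot"
    using Nm_sq_minus_Np_sq_tendsto_0 assms(3,5) by (simp add: Nm_def Np_def)
  have "alpha_limit u \<subseteq> B_I \<union> B2plus_II \<union> B3minus_II"
  proof
    fix y assume y: "y \<in> alpha_limit u"
    have "y \<in> closure B1plus_VI0"
      using alpha_limit_subset_closure_range closure_mono orbit_in_B1plus_VI0 y by blast
    moreover have "Nminus y^2 - Nplus y^2 = 0"
      by (rule alpha_limit_tendsto_eq[OF _ lim y]) (simp add: Nminus_def Nplus_def continuous_intros)
    ultimately show "y \<in> B_I \<union> B2plus_II \<union> B3minus_II"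
      by (intro closure_B1plus_VI0_Nminus_sq_eq_Nplus_sq) auto
  qed
  with lim show ?thesis
    by blast
qed

end
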